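(* Let $X$ be a separable real Banach space and let $(\Omega,\beta,\mu)$ be a complete probability measure space. Let $T:\Omega\times X\to X$ be a continuous random mapping such that there are real-valued random variables $\alpha_2,\alpha_3:\Omega\to[0,\infty)$ with $\alpha_2(\omega)+\alpha_3(\omega)<1$ for all $\omega\in\Omega$ and, for every $\omega\in\Omega$ and all $X$-valued random variables $x_1,x_2:\Omega\to X$, $$\|T(\omega,x_1(\omega))-T(\omega,x_2(\omega))\|\le \alpha_2(\omega)\|x_1(\omega)-T(\omega,x_1(\omega))\|+\alpha_3(\omega)\|x_2(\omega)-T(\omega,x_2(\omega))\|.$$ Then $T$ has a random fixed point, and it is unique (any two random fixed points of $T$ coincide almost surely).
   Context: An $X$-valued random variable is a map $x:\Omega\to X$ such that $x^{-1}(B)\in\beta$ for every Borel set $B\subseteq X$. A random mapping is a map $T:\Omega\times X\to X$ such that $\omega\mapsto T(\omega,x)$ is an $X$-valued random variable for every fixed $x\in X$. A random mapping $T$ is continuous if the set of $\omega\in\Omega$ for which $x\mapsto T(\omega,x)$ is continuous has $\mu$-measure one. A random fixed point of $T$ is an $X$-valued random variable $x$ with $\mu\{\omega\in\Omega: T(\omega,x(\omega))=x(\omega)\}=1$. *)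

theory Defs
  imports "HOL-Analysis.Analysis" "HOL-Probability.Probability"
begin

definition random_mapping :: "'w measure \<Rightarrow> ('w \<Rightarrow> 'a::topological_space \<Rightarrow> 'a) \<Rightarrow> bool" where
  "random_mapping M T \<longleftrightarrow> (\<forall>x. (\<lambda>\<omega>. T \<omega> x) \<in> borel_measurable M)"

definition continuous_random_mapping :: "'w measure \<Rightarrow> ('w \<Rightarrow> 'a::topological_space \<Rightarrow> 'a) \<Rightarrow> bool" where
  "continuous_random_mapping M T \<longleftrightarrow> random_mapping M T \<and>
     measure M {\<omega> \<in> space M. continuous_on UNIV (T \<omega>)} = 1"

definition random_fixed_point :: "'w measure \<Rightarrow> ('w \<Rightarrow> 'a::topological_space \<Rightarrow> 'a) \<Rightarrow> ('w \<Rightarrow> 'a) \<Rightarrow> bool" where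
  "random_fixed_point M T x \<longleftrightarrow> x \<in> borel_measurable M \<and>
     measure M {\<omega> \<in> space M. T \<omega> (x \<omega>) = x \<omega>} = 1"

end

theory Submission
  imports Defs
begin

text \<open>
  For each fixed \<omega> the map T \<omega> satisfies a Kannan--Reich inequality with a + b < 1. Such a map
  moves T x at most a/(1-b) times as far as x, so iterating produces points of arbitrarily small
  displacement norm (x - T x); and since norm (x - y) is bounded by the displacements of x and y,
  any sequence whose displacement tends to 0 is Cauchy and converges to the unique fixed point.
  The random fixed point is the pointwise fixed point; it is measurable because it is the limit of
  the measurable maps choosing, from a countable dense set, the first point of displacement
  below 1/(n+1).
\<close>

locale reich_map =
  fixes T :: "'a::real_normed_vector \<Rightarrow> 'a" and a b :: real
  assumes nonneg: "0 \<le> a" "0 \<le> b" and sum_less_1: "a + b < 1"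
    and reich: "\<And>x y. norm (T x - T y) \<le> a * norm (x - T x) + b * norm (y - T y)"
begin

lemma one_minus_b_pos: "0 < 1 - b"
  using nonneg sum_less_1 by linarith

lemma norm_diff_le_displacements:
  "norm (x - y) \<le> (1 + a) * norm (x - T x) + (1 + b) * norm (y - T y)"
proof -
  have "norm (x - y) \<le> norm (x - T x) + norm (T x - T y) + norm (T y - y)"
    using norm_triangle_ineq[of "x - T x" "T x - T y"]
      norm_triangle_ineq[of "x - T x + (T x - T y)" "T y - y"] by simp
  then show ?thesis
    using reich[of x y] by (simp add: norm_minus_commute algebra_simps)
qed

lemma fixed_point_unique: "T p = p \<Longrightarrow> T q = q \<Longrightarrow> p = q"
  using norm_diff_le_displacements[of p q] by simp

lemma displacement_le_dist_fixed_point: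
  assumes "T p = p"
  shows "norm (x - T x) \<le> norm (x - p) / (1 - b)"
proof -
  have "norm (x - T x) \<le> norm (x - p) + norm (T p - T x)"
    using norm_triangle_ineq[of "x - p" "p - T x"] assms by simp
  also have "\<dots> \<le> norm (x - p) + b * norm (x - T x)"
    using reich[of p x] assms by simp
  finally show ?thesis
    using one_minus_b_pos by (simp add: field_simps)
qed

lemma displacement_image_le: "norm (T x - T (T x)) \<le> a / (1 - b) * norm (x - T x)"
proof -
  have "(1 - b) * norm (T x - T (T x)) \<le> a * norm (x - T x)"
    using reich[of x "T x"] by (simp add: algebra_simps)
  then show ?thesis
    using one_minus_b_pos by (simp add: field_simps)
qed

lemma displacement_funpow_le:
  "norm ((T ^^ k) x - T ((T ^^ k) x)) \<le> (a / (1 - b)) ^ k * norm (x - T x)"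
proof (induction k)
  case (Suc k)
  have "norm ((T ^^ Suc k) x - T ((T ^^ Suc k) x)) \<le> a / (1 - b) * norm ((T ^^ k) x - T ((T ^^ k) x))"
    using displacement_image_le by simp
  also have "\<dots> \<le> a / (1 - b) * ((a / (1 - b)) ^ k * norm (x - T x))"
    using Suc nonneg one_minus_b_pos by (intro mult_left_mono) auto
  finally show ?case by simp
qed simp

lemma approximate_fixed_point_exists:
  assumes "0 < e"
  shows "\<exists>x. norm (x - T x) < e"
proof -
  define q where "q = a / (1 - b)"
  have q: "0 \<le> q" "q < 1"
    using nonneg sum_less_1 one_minus_b_pos by (auto simp: q_def field_simps)
  have "(\<lambda>k. q ^ k * norm (0 - T 0)) \<longlonglongrightarrow> 0 * norm (0 - T 0)"
    using q by (intro tendsto_mult tendsto_const LIMSEQ_power_zero) auto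
  then have "\<forall>\<^sub>F k in sequentially. q ^ k * norm (0 - T 0) < e"
    using assms by (simp add: order_tendstoD(2))
  then obtain k where "q ^ k * norm (0 - T 0) < e"
    by (auto simp: eventually_sequentially)
  then show ?thesis
    using displacement_funpow_le[of k 0] unfolding q_def by (intro exI[of _ "(T ^^ k) 0"]) linarith
qed

lemma Cauchy_if_displacement_tendsto_0:
  assumes lim: "(\<lambda>n. norm (x n - T (x n))) \<longlonglongrightarrow> 0"
  shows "Cauchy x"
proof (rule CauchyI)
  fix e :: real
  assume "0 < e"
  then have "\<forall>\<^sub>F n in sequentially. norm (x n - T (x n)) < e / 4"
    using lim by (intro order_tendstoD(2)) auto
  then obtain N where N: "\<And>n. n \<ge> N \<Longrightarrow> norm (x n - T (x n)) < e / 4"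
    by (auto simp: eventually_sequentially)
  have "norm (x m - x n) < e" if "N \<le> m" "N \<le> n" for m n
  proof -
    have "(1 + a) * norm (x m - T (x m)) \<le> 2 * norm (x m - T (x m))"
      using nonneg sum_less_1 by (intro mult_right_mono) auto
    moreover have "(1 + b) * norm (x n - T (x n)) \<le> 2 * norm (x n - T (x n))"
      using nonneg sum_less_1 by (intro mult_right_mono) auto
    ultimately show ?thesis
      using norm_diff_le_displacements[of "x m" "x n"] N[of m] N[of n] that by linarith
  qed
  then show "\<exists>M. \<forall>m\<ge>M. \<forall>n\<ge>M. norm (x m - x n) < e"
    by blast
qed

lemma limit_is_fixed_point:
  assumes lim: "(\<lambda>n. norm (x n - T (x n))) \<longlonglongrightarrow> 0" and conv: "x \<longlonglongrightarrow> p"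
  shows "T p = p"
proof -
  have "(1 - b) * norm (p - T p) \<le> 0"
  proof (rule LIMSEQ_le_const)
    have "(\<lambda>n. norm (x n - p)) \<longlonglongrightarrow> 0"
      using tendsto_norm[OF LIM_zero[OF conv]] by simp
    from tendsto_add[OF this tendsto_mult[OF tendsto_const lim, of "1 + a"]]
    show "(\<lambda>n. norm (x n - p) + (1 + a) * norm (x n - T (x n))) \<longlonglongrightarrow> 0"
      by simp
    have "(1 - b) * norm (p - T p) \<le> norm (x n - p) + (1 + a) * norm (x n - T (x n))" for n
    proof -
      have "norm (p - T p) \<le> norm (p - x n) + norm (x n - T (x n)) + norm (T (x n) - T p)"
        using norm_triangle_ineq[of "p - x n" "x n - T (x n)"]
          norm_triangle_ineq[of "p - x n + (x n - T (x n))" "T (x n) - T p"] by simp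
      then show ?thesis
        using reich[of "x n" p] by (simp add: norm_minus_commute algebra_simps)
    qed
    then show "\<exists>N. \<forall>n\<ge>N. (1 - b) * norm (p - T p) \<le> norm (x n - p) + (1 + a) * norm (x n - T (x n))"
      by blast
  qed
  then show ?thesis
    using one_minus_b_pos by (simp add: mult_le_0_iff)
qed

end

locale complete_reich_map = reich_map T a b for T :: "'a::banach \<Rightarrow> 'a" and a b
begin

lemma tendsto_fixed_point_if_displacement_tendsto_0:
  assumes "(\<lambda>n. norm (x n - T (x n))) \<longlonglongrightarrow> 0"
  shows "\<exists>p. T p = p \<and> x \<longlonglongrightarrow> p"
  using assms Cauchy_if_displacement_tendsto_0 limit_is_fixed_point
  by (metis convergent_def convergent_eq_Cauchy)

lemma ex1_fixed_point: "\<exists>!p. T p = p"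
proof -
  have "\<forall>n. \<exists>y. norm (y - T y) < inverse (real (Suc n))"
    using approximate_fixed_point_exists by simp
  then obtain x where "\<And>n. norm (x n - T (x n)) < inverse (real (Suc n))"
    by metis
  then have "(\<lambda>n. norm (x n - T (x n))) \<longlonglongrightarrow> 0"
    by (intro Lim_null_comparison[OF _ LIMSEQ_inverse_real_of_nat] always_eventually)
      (simp add: less_imp_le)
  then show ?thesis
    using tendsto_fixed_point_if_displacement_tendsto_0 fixed_point_unique by blast
qed

end

lemma borel_measurable_reich_fixed_point:
  fixes T :: "'w \<Rightarrow> 'a::{banach, second_countable_topology} \<Rightarrow> 'a"
  assumes [measurable]: "\<And>x. (\<lambda>\<omega>. T \<omega> x) \<in> borel_measurable M"
    and reich: "\<And>\<omega>. \<omega> \<in> space M \<Longrightarrow> complete_reich_map (T \<omega>) (a \<omega>) (b \<omega>)"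
  shows "(\<lambda>\<omega>. THE p. T \<omega> p = p) \<in> borel_measurable M"
proof -
  define f where "f \<omega> = (THE p. T \<omega> p = p)" for \<omega>
  have fixed: "T \<omega> (f \<omega>) = f \<omega>" if "\<omega> \<in> space M" for \<omega>
    unfolding f_def using theI'[OF complete_reich_map.ex1_fixed_point[OF reich[OF that]]] .
  obtain D :: "'a set" where D: "countable D" "D \<noteq> {}" "\<And>U. open U \<Longrightarrow> U \<noteq> {} \<Longrightarrow> \<exists>y\<in>D. y \<in> U"
    using countable_dense_exists by blast
  define d where "d = from_nat_into D"
  have small: "\<exists>k. norm (d k - T \<omega> (d k)) < e" if \<omega>: "\<omega> \<in> space M" and "0 < e" for \<omega> e
  proof -
    interpret complete_reich_map "T \<omega>" "a \<omega>" "b \<omega>"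
      using reich[OF \<omega>] .
    have "0 < e * (1 - b \<omega>)"
      using \<open>0 < e\<close> one_minus_b_pos by simp
    then obtain y where "y \<in> D" "y \<in> ball (f \<omega>) (e * (1 - b \<omega>))"
      using D(3)[of "ball (f \<omega>) (e * (1 - b \<omega>))"] by auto
    moreover have "range d = D"
      unfolding d_def using D by (simp add: range_from_nat_into)
    ultimately obtain j where j: "d j = y" and "norm (y - f \<omega>) < e * (1 - b \<omega>)"
      by (auto simp: dist_norm norm_minus_commute)
    then have "norm (y - f \<omega>) / (1 - b \<omega>) < e"
      using one_minus_b_pos by (simp add: field_simps)
    then have "norm (y - T \<omega> y) < e"
      using displacement_le_dist_fixed_point[OF fixed[OF \<omega>], of y] by linarith
    then show ?thesis
      using j by blast
  qed
  define k where "k n \<omega> = (LEAST k. norm (d k - T \<omega> (d k)) < inverse (real (Suc n)))" for n \<omega>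
  have measurable_k: "k n \<in> measurable M (count_space UNIV)" for n
    unfolding k_def by measurable
  have measurable_approx: "(\<lambda>\<omega>. d (k n \<omega>)) \<in> borel_measurable M" for n
    by (rule measurable_compose_countable'[OF measurable_const measurable_k]) (auto intro: countableI_type)
  have "(\<lambda>n. d (k n \<omega>)) \<longlonglongrightarrow> f \<omega>" if \<omega>: "\<omega> \<in> space M" for \<omega>
  proof -
    interpret complete_reich_map "T \<omega>" "a \<omega>" "b \<omega>"
      using reich[OF \<omega>] .
    have "norm (d (k n \<omega>) - T \<omega> (d (k n \<omega>))) < inverse (real (Suc n))" for n
      unfolding k_def by (rule LeastI_ex) (simp add: small[OF \<omega>])
    then have "(\<lambda>n. norm (d (k n \<omega>) - T \<omega> (d (k n \<omega>)))) \<longlonglongrightarrow> 0"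
      by (intro Lim_null_comparison[OF _ LIMSEQ_inverse_real_of_nat] always_eventually)
        (simp add: less_imp_le)
    then show ?thesis
      using tendsto_fixed_point_if_displacement_tendsto_0 fixed_point_unique fixed[OF \<omega>] by metis
  qed
  from borel_measurable_LIMSEQ_metric[OF measurable_approx this] show ?thesis
    unfolding f_def .
qed

lemma random_fixed_point_AE_unique:
  assumes "prob_space M"
    and unique: "\<And>\<omega> p q. \<omega> \<in> space M \<Longrightarrow> T \<omega> p = p \<Longrightarrow> T \<omega> q = q \<Longrightarrow> p = q"
    and "random_fixed_point M T x" "random_fixed_point M T y"
  shows "AE \<omega> in M. x \<omega> = y \<omega>"
proof -
  have "AE \<omega> in M. \<omega> \<in> {\<omega> \<in> space M. T \<omega> (z \<omega>) = z \<omega>}" if "random_fixed_point M T z" for z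
    using that unfolding random_fixed_point_def by (intro prob_space.AE_prob_1[OF assms(1)]) simp
  from this[OF assms(3)] this[OF assms(4)] show ?thesis
    by eventually_elim (use unique in blast)
qed

theorem corollary3p4:
  fixes M :: "'w measure"
    and T :: "'w \<Rightarrow> 'a::{banach, second_countable_topology} \<Rightarrow> 'a"
    and \<alpha>2 \<alpha>3 :: "'w \<Rightarrow> real"
  assumes "prob_space M" and "complete_measure M"
    and "continuous_random_mapping M T"
    and "\<alpha>2 \<in> borel_measurable M" and "\<alpha>3 \<in> borel_measurable M"
    and "\<forall>\<omega>\<in>space M. 0 \<le> \<alpha>2 \<omega> \<and> 0 \<le> \<alpha>3 \<omega> \<and> \<alpha>2 \<omega> + \<alpha>3 \<omega> < 1"
    and "\<forall>\<omega>\<in>space M. \<forall>x1 x2. x1 \<in> borel_measurable M \<longrightarrow> x2 \<in> borel_measurable M \<longrightarrow>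
           norm (T \<omega> (x1 \<omega>) - T \<omega> (x2 \<omega>))
             \<le> \<alpha>2 \<omega> * norm (x1 \<omega> - T \<omega> (x1 \<omega>)) + \<alpha>3 \<omega> * norm (x2 \<omega> - T \<omega> (x2 \<omega>))"
  shows "(\<exists>x. random_fixed_point M T x) \<and>
         (\<forall>x y. random_fixed_point M T x \<longrightarrow> random_fixed_point M T y \<longrightarrow> (AE \<omega> in M. x \<omega> = y \<omega>))"
proof -
  have measurable_T: "(\<lambda>\<omega>. T \<omega> x) \<in> borel_measurable M" for x
    using assms(3) unfolding continuous_random_mapping_def random_mapping_def by blast
  have reich: "complete_reich_map (T \<omega>) (\<alpha>2 \<omega>) (\<alpha>3 \<omega>)" if "\<omega> \<in> space M" for \<omega>
    \<comment> \<open>constant random variables turn the hypothesis into a pointwise inequality\<close>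
    using assms(6,7) that by unfold_locales (auto dest!: bspec spec[of _ "\<lambda>_. _"])
  define f where "f \<omega> = (THE p. T \<omega> p = p)" for \<omega>
  have "T \<omega> (f \<omega>) = f \<omega>" if "\<omega> \<in> space M" for \<omega>
    unfolding f_def using theI'[OF complete_reich_map.ex1_fixed_point[OF reich[OF that]]] .
  then have "{\<omega> \<in> space M. T \<omega> (f \<omega>) = f \<omega>} = space M"
    by auto
  then have "random_fixed_point M T f"
    using borel_measurable_reich_fixed_point[OF measurable_T reich] prob_space.prob_space[OF assms(1)]
    unfolding random_fixed_point_def f_def by simp
  moreover have "T \<omega> p = p \<Longrightarrow> T \<omega> q = q \<Longrightarrow> p = q" if "\<omega> \<in> space M" for \<omega> p q
    using reich_map.fixed_point_unique[OF complete_reich_map.axioms[OF reich[OF that]]] .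
  ultimately show ?thesis
    using random_fixed_point_AE_unique[OF assms(1)] by blast
qed

end
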